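(* Let $P_1$ be the uniform distribution on $[0,\frac12]$, let $P_2$ be the uniform distribution on $[\frac12,1]$, and let $P=\frac34P_1+\frac14P_2$. Then the set $$\Big\{\tfrac13\big(\tfrac18(21-\sqrt3)-2\big),\ \tfrac18(21-\sqrt3)-2,\ \tfrac1{24}(21-\sqrt3)\Big\}$$ forms an optimal set of three-means for $P$, with quantization error $V_3=0.00787482$.
   Context: For a finite set $\alpha\subset\mathbb R$, $V(P;\alpha)=\int\min_{a\in\alpha}(x-a)^2\,dP(x)$; $V_n=\inf\{V(P;\alpha):\mathrm{card}(\alpha)\le n\}$; an optimal set of $n$-means is a set $\alpha$ with $\mathrm{card}(\alpha)\le n$ and $V(P;\alpha)=V_n$. The numerical value of $V_3$ is a decimal approximation as given in the source. *)

theory Defs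
  imports "HOL-Analysis.Analysis"
begin

definition quant_err :: "real measure \<Rightarrow> real set \<Rightarrow> real" where
  "quant_err P \<alpha> = (\<integral>x. Min ((\<lambda>a. (x - a)^2) ` \<alpha>) \<partial>P)"

text \<open>n-th quantization error V_n: infimum over sets with 1 \<le> card \<le> n (card \<ge> 1 forces finiteness and nonemptiness).\<close>
definition quant_Vn :: "real measure \<Rightarrow> nat \<Rightarrow> real" where
  "quant_Vn P n = (INF \<alpha> \<in> {\<alpha>. 1 \<le> card \<alpha> \<and> card \<alpha> \<le> n}. quant_err P \<alpha>)"

definition optimal_n_means :: "real measure \<Rightarrow> nat \<Rightarrow> real set \<Rightarrow> bool" where
  "optimal_n_means P n \<alpha> \<longleftrightarrow> 1 \<le> card \<alpha> \<and> card \<alpha> \<le> n \<and> quant_err P \<alpha> = quant_Vn P n"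

definition P_mix :: "real measure" where
  "P_mix = density lborel (\<lambda>x. ennreal (3/4 * (2 * indicator {0..1/2} x)
                                     + 1/4 * (2 * indicator {1/2..1} x)))"

end

theory Submission
  imports Defs "HOL-Library.Sum_of_Squares"
begin

text \<open>For sorted centres \<open>a1 \<le> a2 \<le> a3\<close> the Voronoi cells are cut at the midpoints, so against
  the density \<open>3/2\<close> on \<open>[0,1/2]\<close> and \<open>1/2\<close> on \<open>[1/2,1]\<close> the quantization error is a piecewise
  cubic polynomial in the centres, and clamping the centres into \<open>[0,1]\<close> can only lower it.
  In the essential configuration (\<open>1/2\<close> lies in the cell of \<open>a2\<close> and \<open>a2 \<le> 1/2\<close>), optimising the
  outer centres for fixed \<open>a2\<close> yields the centroid conditions \<open>3 a1 = a2\<close> and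
  \<open>3 (a3 - a2) = 2 (1 - a2)\<close> and leaves the cubic \<open>a2^3/18 + (1/2 - a2)^3/3 + (1 - a2)^3/54\<close>,
  whose minimum on \<open>[0,1/2]\<close> is \<open>(4 - sqrt 3)/288\<close>, attained at \<open>a2 = (5 - sqrt 3)/8\<close>.
  In every other configuration cruder estimates give at least \<open>19/2304 > (4 - sqrt 3)/288\<close>.\<close>

definition mix_dens :: "real \<Rightarrow> real" where
  "mix_dens x = 3/2 * indicator {0..1/2} x + 1/2 * indicator {1/2..1} x"

lemma P_mix_eq_density: "P_mix = density lborel (\<lambda>x. ennreal (mix_dens x))"
  by (simp add: P_mix_def mix_dens_def)

lemma mix_dens_nonneg: "0 \<le> mix_dens x"
  by (simp add: mix_dens_def)

lemma mix_dens_eq_0: "x \<notin> {0..1} \<Longrightarrow> mix_dens x = 0"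
  by (auto simp: mix_dens_def)

lemma borel_measurable_mix_dens [measurable]: "mix_dens \<in> borel_measurable borel"
  unfolding mix_dens_def[abs_def] by measurable

lemma integrable_power2_diff_atLeastAtMost:
  fixes a l r :: real
  shows "integrable lborel (\<lambda>x. (x - a)^2 * indicator {l..r} x)"
  by (intro borel_integrable_atLeastAtMost continuous_intros)

lemma integral_power2_diff_atLeastAtMost:
  fixes a l r :: real
  assumes "l \<le> r"
  shows "(\<integral>x. (x - a)^2 * indicator {l..r} x \<partial>lborel) = ((r - a)^3 - (l - a)^3) / 3"
proof -
  have "(\<integral>x. (x - a)^2 * indicator {l..r} x \<partial>lborel) = (r - a)^3 / 3 - (l - a)^3 / 3"
    by (rule integral_FTC_Icc_real[OF assms])
       (auto intro!: derivative_eq_intros continuous_intros simp: power2_eq_square)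
  then show ?thesis
    by (simp add: diff_divide_distrib)
qed

definition cost_below :: "real \<Rightarrow> real \<Rightarrow> real" where
  "cost_below a y = (\<integral>x. mix_dens x * ((x - a)^2 * indicator {..y} x) \<partial>lborel)"

lemma mix_dens_power2_diff_split:
  "mix_dens x * ((x - a)^2 * indicator {..y} x)
     = 3/2 * ((x - a)^2 * indicator {0..min y (1/2)} x) + 1/2 * ((x - a)^2 * indicator {1/2..min y 1} x)"
  by (auto simp: mix_dens_def indicator_def)

lemma integrable_cost_below:
  "integrable lborel (\<lambda>x. mix_dens x * ((x - a)^2 * indicator {..y} x))"
  unfolding mix_dens_power2_diff_split by (simp add: integrable_power2_diff_atLeastAtMost)

lemma cost_below_eq:
  "cost_below a y = 3/2 * (\<integral>x. (x - a)^2 * indicator {0..min y (1/2)} x \<partial>lborel)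
                  + 1/2 * (\<integral>x. (x - a)^2 * indicator {1/2..min y 1} x \<partial>lborel)"
  unfolding cost_below_def mix_dens_power2_diff_split
  by (simp add: integrable_power2_diff_atLeastAtMost)

lemma cost_below_left:
  assumes "0 \<le> y" "y \<le> 1/2"
  shows "cost_below a y = ((y - a)^3 + a^3) / 2"
proof -
  have "(\<integral>x. (x - a)^2 * indicator {1/2..y} x \<partial>lborel) = 0"
  proof (cases "y = 1/2")
    case True
    show ?thesis unfolding True using integral_power2_diff_atLeastAtMost[of "1/2" "1/2" a] by simp
  next
    case False
    then have "{1/2..y} = {}" using assms by auto
    then show ?thesis by simp
  qed
  with assms show ?thesis
    by (simp add: cost_below_eq integral_power2_diff_atLeastAtMost min_absorb1)
qed

lemma cost_below_right:
  assumes "1/2 \<le> y" "y \<le> 1"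
  shows "cost_below a y = ((1/2 - a)^3 + a^3) / 2 + ((y - a)^3 - (1/2 - a)^3) / 6"
  using assms
  by (simp add: cost_below_eq integral_power2_diff_atLeastAtMost min_absorb1 min_absorb2)

lemma AE_P_mix_atLeastAtMost: "AE x in P_mix. x \<in> {0..1}"
  unfolding P_mix_eq_density
  by (subst AE_density) (auto intro!: AE_I2 simp: mix_dens_def split: split_indicator)

lemma integrable_P_mix_power2_diff: "integrable P_mix (\<lambda>x. (x - a)^2)"
proof -
  have "(\<lambda>x. mix_dens x * (x - a)^2) = (\<lambda>x. mix_dens x * ((x - a)^2 * indicator {..1} x))"
    by (auto simp: fun_eq_iff mix_dens_def split: split_indicator)
  then have "integrable lborel (\<lambda>x. mix_dens x * (x - a)^2)"
    by (simp only: integrable_cost_below)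
  then show ?thesis
    unfolding P_mix_eq_density by (subst integrable_density) (simp_all add: mix_dens_nonneg)
qed

lemma integrable_P_mix_Min_power2_diff:
  assumes "finite A" "a \<in> A"
  shows "integrable P_mix (\<lambda>x. Min ((\<lambda>b. (x - b)^2) ` A))"
proof (rule Bochner_Integration.integrable_bound[OF integrable_P_mix_power2_diff[of a]])
  show "(\<lambda>x. Min ((\<lambda>b. (x - b)^2) ` A)) \<in> borel_measurable P_mix"
    unfolding P_mix_eq_density using assms(1) by measurable
  show "AE x in P_mix. norm (Min ((\<lambda>b. (x - b)^2) ` A)) \<le> norm ((x - a)^2)"
  proof (intro AE_I2)
    fix x
    have "0 \<le> Min ((\<lambda>b. (x - b)^2) ` A)"
      using assms by (subst Min_ge_iff) auto
    moreover have "Min ((\<lambda>b. (x - b)^2) ` A) \<le> (x - a)^2"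
      using assms by (auto simp: Min_le_iff)
    ultimately show "norm (Min ((\<lambda>b. (x - b)^2) ` A)) \<le> norm ((x - a)^2)"
      by simp
  qed
qed

definition clamp01 :: "real \<Rightarrow> real" where
  "clamp01 a = max 0 (min 1 a)"

lemma power2_diff_clamp01_le: "x \<in> {0..1} \<Longrightarrow> (x - clamp01 a)^2 \<le> (x - a)^2"
  by (rule abs_le_square_iff[THEN iffD1]) (auto simp: clamp01_def)

lemma quant_err_P_mix_clamp01_le:
  assumes "finite A" "A \<noteq> {}"
  shows "quant_err P_mix (clamp01 ` A) \<le> quant_err P_mix A"
  unfolding quant_err_def
proof (rule integral_mono_AE)
  obtain a where "a \<in> A" using assms(2) by blast
  then show "integrable P_mix (\<lambda>x. Min ((\<lambda>b. (x - b)^2) ` clamp01 ` A))"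
      and "integrable P_mix (\<lambda>x. Min ((\<lambda>b. (x - b)^2) ` A))"
    using assms(1) by (auto intro: integrable_P_mix_Min_power2_diff)
  show "AE x in P_mix. Min ((\<lambda>b. (x - b)^2) ` clamp01 ` A) \<le> Min ((\<lambda>b. (x - b)^2) ` A)"
    using AE_P_mix_atLeastAtMost
  proof eventually_elim
    case (elim x)
    show ?case
      using assms power2_diff_clamp01_le[OF elim] by (auto simp: Min_le_iff)
  qed
qed

lemma power2_diff_le_if_le_midpoint:
  fixes a b x :: real
  assumes "a \<le> b" "x \<le> (a + b) / 2"
  shows "(x - a)^2 \<le> (x - b)^2"
proof -
  have "(x - b)^2 - (x - a)^2 = (b - a) * (a + b - 2 * x)"
    by (simp add: power2_eq_square algebra_simps)
  also have "\<dots> \<ge> 0"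
    using assms by simp
  finally show ?thesis by simp
qed

lemma power2_diff_le_if_midpoint_le:
  fixes a b x :: real
  assumes "a \<le> b" "(a + b) / 2 \<le> x"
  shows "(x - b)^2 \<le> (x - a)^2"
  using power2_diff_le_if_le_midpoint[of "-b" "-a" "-x"] assms by (simp add: power2_commute)

lemma Min_power2_diff_sorted3:
  fixes a1 a2 a3 x :: real
  assumes "a1 \<le> a2" "a2 \<le> a3"
  shows "Min ((\<lambda>a. (x - a)^2) ` {a1, a2, a3})
           = (if x \<le> (a1 + a2) / 2 then (x - a1)^2
              else if x \<le> (a2 + a3) / 2 then (x - a2)^2 else (x - a3)^2)"
  using assms power2_diff_le_if_le_midpoint[of a1 a2 x] power2_diff_le_if_le_midpoint[of a2 a3 x]
        power2_diff_le_if_midpoint_le[of a1 a2 x] power2_diff_le_if_midpoint_le[of a2 a3 x]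
  by (auto simp: min_def)

definition voronoi_cost :: "real \<Rightarrow> real \<Rightarrow> real \<Rightarrow> real" where
  "voronoi_cost a1 a2 a3 =
     cost_below a1 ((a1 + a2) / 2)
     + (cost_below a2 ((a2 + a3) / 2) - cost_below a2 ((a1 + a2) / 2))
     + (cost_below a3 1 - cost_below a3 ((a2 + a3) / 2))"

lemma quant_err_P_mix_sorted3:
  fixes a1 a2 a3 :: real
  assumes "a1 \<le> a2" "a2 \<le> a3"
  shows "quant_err P_mix {a1, a2, a3} = voronoi_cost a1 a2 a3"
proof -
  define c where "c a y x = mix_dens x * ((x - a)^2 * indicator {..y} x)" for a y x :: real
  define m1 m2 where "m1 = (a1 + a2) / 2" and "m2 = (a2 + a3) / 2"
  have "m1 \<le> m2" using assms by (simp add: m1_def m2_def)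
  have cells: "mix_dens x * Min ((\<lambda>a. (x - a)^2) ` {a1, a2, a3})
                 = c a1 m1 x + (c a2 m2 x - c a2 m1 x) + (c a3 1 x - c a3 m2 x)" for x
  proof (cases "x \<in> {0..1}")
    case True
    with \<open>m1 \<le> m2\<close> show ?thesis
      unfolding Min_power2_diff_sorted3[OF assms] m1_def[symmetric] m2_def[symmetric]
      by (auto simp: c_def split: split_indicator)
  qed (simp add: c_def mix_dens_eq_0)
  have "quant_err P_mix {a1, a2, a3} = (\<integral>x. mix_dens x * Min ((\<lambda>a. (x - a)^2) ` {a1, a2, a3}) \<partial>lborel)"
    unfolding quant_err_def P_mix_eq_density by (subst integral_density) (simp_all add: mix_dens_nonneg)
  also have "\<dots> = voronoi_cost a1 a2 a3"
    unfolding cells by (simp add: c_def integrable_cost_below voronoi_cost_def cost_below_def m1_def m2_def)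
  finally show ?thesis .
qed

lemma voronoi_cost_left:
  fixes a1 a2 a3 :: real
  assumes "0 \<le> a1" "a1 \<le> a2" "a2 \<le> a3" "a3 \<le> 1" "a2 + a3 \<le> 1"
  shows "voronoi_cost a1 a2 a3
           = a1^3/2 + (a2 - a1)^3/8 + (a3 - a2)^3/8 + (1/2 - a3)^3/3 + (1 - a3)^3/6"
  using assms
  by (simp add: voronoi_cost_def cost_below_left cost_below_right) (simp add: field_simps power3_eq_cube)

lemma voronoi_cost_middle:
  fixes a1 a2 a3 :: real
  assumes "0 \<le> a1" "a1 \<le> a2" "a2 \<le> a3" "a3 \<le> 1" "a1 + a2 \<le> 1" "1 \<le> a2 + a3"
  shows "voronoi_cost a1 a2 a3
           = a1^3/2 + (a2 - a1)^3/8 + (1/2 - a2)^3/3 + (a3 - a2)^3/24 + (1 - a3)^3/6"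
  using assms
  by (simp add: voronoi_cost_def cost_below_left cost_below_right) (simp add: field_simps power3_eq_cube)

lemma voronoi_cost_right:
  fixes a1 a2 a3 :: real
  assumes "0 \<le> a1" "a1 \<le> a2" "a2 \<le> a3" "a3 \<le> 1" "1 \<le> a1 + a2"
  shows "voronoi_cost a1 a2 a3
           = (a1^3 + (1/2 - a1)^3)/2 + ((a2 - a1)^3/8 - (1/2 - a1)^3)/6
             + (a2 - a1)^3/48 + (a3 - a2)^3/24 + (1 - a3)^3/6"
  using assms
  by (simp add: voronoi_cost_def cost_below_left cost_below_right) (simp add: field_simps power3_eq_cube)

lemma left_pair_cost_eq:
  fixes a b :: real
  shows "a^3/2 + (b - a)^3/8 = b^3/18 + (3*a - b)^2 * (3*a + 5*b) / 72"
  by (simp add: field_simps power2_eq_square power3_eq_cube)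

lemma right_pair_cost_eq:
  fixes c d :: real
  shows "d^3/24 + (c - d)^3/6 = c^3/54 + (3*d - 2*c)^2 * (8*c - 3*d) / 216"
  by (simp add: field_simps power2_eq_square power3_eq_cube)

lemma middle_cost_eq:
  fixes a :: real
  shows "a^3/18 + (1/2 - a)^3/3 + (1 - a)^3/54
           = (4 - sqrt 3)/288 + 8/27 * (a - (5 - sqrt 3)/8)^2 * ((5 + 2 * sqrt 3)/8 - a)"
proof -
  have "a^3/18 + (1/2 - a)^3/3 + (1 - a)^3/54 - (4 - t)/288 - 8/27 * (a - (5 - t)/8)^2 * ((5 + 2*t)/8 - a)
          = - (3 * (8*a - 5) + 2*t) * (t^2 - 3) / 1728" for t :: real
    by (simp add: field_simps power2_eq_square power3_eq_cube)
  from this[of "sqrt 3"] show ?thesis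
    by (simp only: real_sqrt_pow2 zero_le_numeral diff_self mult_zero_right div_0)
qed

text \<open>Jensen's inequality for \<open>t^3\<close> at the four points \<open>p, q/2, q/2, r\<close>.\<close>

lemma power3_sum_le:
  fixes p q r :: real
  assumes "0 \<le> p" "0 \<le> q" "0 \<le> r"
  shows "(p + q + r)^3 \<le> 16 * (p^3 + q^3/4 + r^3)"
  using assms by (sos "(((A<0 * R<1) + (((A<=2 * R<1) * ((R<1/3 * [p + 2*q + ~5*r]^2) + (R<5/3 * [q + ~2*r]^2))) + (((A<=1 * R<1) * ((R<31/3 * [p + ~9/31*q + ~13/31*r]^2) + (R<66/31 * [q + ~2*r]^2))) + ((A<=0 * R<1) * ((R<15 * [p + ~4/9*q + ~1/9*r]^2) + (R<1/27 * [q + ~2*r]^2)))))))")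

lemma sqrt_3_bounds: "1.7320508 < sqrt (3::real)" "sqrt (3::real) < 1.7320509"
proof -
  show "1.7320508 < sqrt (3::real)"
    by (rule real_less_rsqrt) (simp add: power2_eq_square)
  have "sqrt (3::real) < sqrt (1.7320509^2)"
    by (subst real_sqrt_less_iff) (simp add: power2_eq_square)
  then show "sqrt (3::real) < 1.7320509" by simp
qed

lemma voronoi_cost_left_ge:
  fixes a1 a2 a3 :: real
  assumes "0 \<le> a1" "a1 \<le> a2" "a2 \<le> a3" "a3 \<le> 1" "a2 + a3 \<le> 1"
  shows "1/108 \<le> voronoi_cost a1 a2 a3"
proof -
  have "0 \<le> a1^3/2 + (a2 - a1)^3/8"
    using assms by simp
  moreover have "1/108 \<le> (a3 - a2)^3/8 + (1/2 - a3)^3/3 + (1 - a3)^3/6"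
  proof (cases "a3 \<le> 1/2")
    case True
    have "1/8 \<le> (1 - a3)^3"
      using power_mono[of "1/2" "1 - a3" 3] True by (simp add: power_divide)
    moreover have "0 \<le> (a3 - a2)^3" "0 \<le> (1/2 - a3)^3"
      using assms True by simp_all
    ultimately show ?thesis by linarith
  next
    case False
    define w where "w = a3 - 1/2"
    have "(2*w)^3 \<le> (a3 - a2)^3"
      using assms False by (intro power_mono) (auto simp: w_def)
    moreover have "w^3 * (2/3) + (1/2 - w)^3/6 = 1/108 + (w - 1/6)^2 * (3*w + 5/2) / 6"
      by (simp add: field_simps power2_eq_square power3_eq_cube)
    moreover have "0 \<le> (w - 1/6)^2 * (3*w + 5/2) / 6"
      using False by (simp add: w_def)
    moreover have "(1/2 - a3)^3 = -(w^3)" "1 - a3 = 1/2 - w"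
      by (simp_all add: w_def power3_eq_cube algebra_simps)
    ultimately show ?thesis by (simp add: power_mult_distrib)
  qed
  ultimately show ?thesis
    using voronoi_cost_left[OF assms] by linarith
qed

lemma voronoi_cost_middle_ge:
  fixes a1 a2 a3 :: real
  assumes "0 \<le> a1" "a1 \<le> a2" "a2 \<le> a3" "a3 \<le> 1" "a1 + a2 \<le> 1" "1 \<le> a2 + a3"
    and "a2 \<le> 1/2"
  shows "(4 - sqrt 3)/288 \<le> voronoi_cost a1 a2 a3"
proof -
  have "0 \<le> (3*a1 - a2)^2 * (3*a1 + 5*a2) / 72"
    using assms by simp
  then have "a2^3/18 \<le> a1^3/2 + (a2 - a1)^3/8"
    using left_pair_cost_eq[of a1 a2] by linarith
  moreover have "0 \<le> (3*(a3 - a2) - 2*(1 - a2))^2 * (8*(1 - a2) - 3*(a3 - a2)) / 216"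
    using assms by simp
  then have "(1 - a2)^3/54 \<le> (a3 - a2)^3/24 + (1 - a3)^3/6"
    using right_pair_cost_eq[where c = "1 - a2" and d = "a3 - a2"] by simp
  moreover have "0 \<le> 8/27 * (a2 - (5 - sqrt 3)/8)^2 * ((5 + 2 * sqrt 3)/8 - a2)"
    using sqrt_3_bounds assms by simp
  then have "(4 - sqrt 3)/288 \<le> a2^3/18 + (1/2 - a2)^3/3 + (1 - a2)^3/54"
    using middle_cost_eq[of a2] by linarith
  ultimately show ?thesis
    using voronoi_cost_middle[OF assms(1-6)] by linarith
qed

lemma voronoi_cost_middle_right_ge:
  fixes a1 a2 a3 :: real
  assumes "0 \<le> a1" "a1 \<le> a2" "a2 \<le> a3" "a3 \<le> 1" "a1 + a2 \<le> 1" "1 \<le> a2 + a3"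
    and "1/2 \<le> a2"
  shows "19/2304 \<le> voronoi_cost a1 a2 a3"
proof -
  define k w where "k = 1/2 - a1" and "w = a2 - 1/2"
  have "0 \<le> w" "w \<le> k"
    using assms by (auto simp: k_def w_def)
  have "1/144 \<le> a1^3/2 + k^3/8"
    using left_pair_cost_eq[of a1 "1/2"] assms by (simp add: k_def power_divide)
  moreover have "k^3/8 + w^3/2 \<le> (k + w)^3/8"
  proof -
    have "(k + w)^3/8 - k^3/8 - w^3/2 = w * (3*k^2 + 3*k*w - 3*w^2) / 8"
      by (simp add: field_simps power2_eq_square power3_eq_cube)
    moreover have "w^2 \<le> k^2" "0 \<le> k * w"
      using \<open>0 \<le> w\<close> \<open>w \<le> k\<close> by (auto intro: power_mono)
    then have "0 \<le> w * (3*k^2 + 3*k*w - 3*w^2) / 8"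
      using \<open>0 \<le> w\<close> by simp
    ultimately show ?thesis by linarith
  qed
  moreover have "1/8 \<le> 16 * (w^3 + (a3 - a2)^3/4 + (1 - a3)^3)"
    using power3_sum_le[of w "a3 - a2" "1 - a3"] assms by (simp add: w_def power_divide)
  moreover have "(a2 - a1)^3 = (k + w)^3" "(1/2 - a2)^3 = -(w^3)"
    by (simp_all add: k_def w_def power3_eq_cube algebra_simps)
  ultimately show ?thesis
    using voronoi_cost_middle[OF assms(1-6)] by argo
qed

lemma voronoi_cost_right_ge:
  fixes a1 a2 a3 :: real
  assumes "0 \<le> a1" "a1 \<le> a2" "a2 \<le> a3" "a3 \<le> 1" "1 \<le> a1 + a2"
  shows "1/64 \<le> voronoi_cost a1 a2 a3"
proof -
  have "a1^3 + (1/2 - a1)^3 = 1/32 + 3/2 * (a1 - 1/4)^2"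
    by (simp add: field_simps power2_eq_square power3_eq_cube)
  moreover have "(1/2 - a1)^3 \<le> ((a2 - a1)/2)^3"
    using assms by (intro power_mono_odd) auto
  then have "(1/2 - a1)^3 \<le> (a2 - a1)^3/8"
    by (simp add: power_divide)
  moreover have "0 \<le> (a1 - 1/4)^2" "0 \<le> (a2 - a1)^3" "0 \<le> (a3 - a2)^3" "0 \<le> (1 - a3)^3"
    using assms by simp_all
  ultimately show ?thesis
    using voronoi_cost_right[OF assms] by argo
qed

lemma voronoi_cost_ge:
  fixes a1 a2 a3 :: real
  assumes "0 \<le> a1" "a1 \<le> a2" "a2 \<le> a3" "a3 \<le> 1"
  shows "(4 - sqrt 3)/288 \<le> voronoi_cost a1 a2 a3"
proof -
  have "(4 - sqrt 3)/288 \<le> 63/8000"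
    using sqrt_3_bounds by simp
  then consider "a2 + a3 \<le> 1" | "a1 + a2 \<le> 1" "1 \<le> a2 + a3" "a2 \<le> 1/2"
    | "a1 + a2 \<le> 1" "1 \<le> a2 + a3" "1/2 \<le> a2" | "1 \<le> a1 + a2"
    by linarith
  then show ?thesis
    using \<open>(4 - sqrt 3)/288 \<le> 63/8000\<close> voronoi_cost_left_ge[OF assms] voronoi_cost_middle_ge[OF assms]
      voronoi_cost_middle_right_ge[OF assms] voronoi_cost_right_ge[OF assms]
    by cases linarith+
qed

lemma voronoi_cost_at_centroids:
  "voronoi_cost ((5 - sqrt 3)/24) ((5 - sqrt 3)/8) ((21 - sqrt 3)/24) = (4 - sqrt 3)/288"
proof -
  define b1 b2 b3 where "b1 = (5 - sqrt 3)/24" and "b2 = (5 - sqrt 3)/8" and "b3 = (21 - sqrt 3)/24"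
  have z: "3*b1 - b2 = 0" "3*(b3 - b2) - 2*(1 - b2) = 0" "b2 - (5 - sqrt 3)/8 = 0"
    by (simp_all add: b1_def b2_def b3_def field_simps)
  have "b1^3/2 + (b2 - b1)^3/8 = b2^3/18"
    using left_pair_cost_eq[of b1 b2, unfolded z] by simp
  moreover have "(b3 - b2)^3/24 + (1 - b3)^3/6 = (1 - b2)^3/54"
    using right_pair_cost_eq[where c = "1 - b2" and d = "b3 - b2", unfolded z] by simp
  moreover have "b2^3/18 + (1/2 - b2)^3/3 + (1 - b2)^3/54 = (4 - sqrt 3)/288"
    using middle_cost_eq[of b2, unfolded z] by simp
  moreover have "voronoi_cost b1 b2 b3
                   = b1^3/2 + (b2 - b1)^3/8 + (1/2 - b2)^3/3 + (b3 - b2)^3/24 + (1 - b3)^3/6"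
    using sqrt_3_bounds by (intro voronoi_cost_middle) (simp_all add: b1_def b2_def b3_def field_simps)
  ultimately show ?thesis
    unfolding b1_def b2_def b3_def by linarith
qed

lemma card_le_3_eq_sorted_triple:
  fixes A :: "'a::linorder set"
  assumes "1 \<le> card A" "card A \<le> 3"
  obtains a1 a2 a3 where "a1 \<le> a2" "a2 \<le> a3" "A = {a1, a2, a3}"
proof -
  have "finite A"
    using assms(1) card.infinite by force
  define xs where "xs = sorted_list_of_set A"
  have xs: "sorted xs" "set xs = A" "length xs = card A"
    using \<open>finite A\<close> by (auto simp: xs_def)
  consider x where "xs = [x]" | x y where "xs = [x, y]" | x y z where "xs = [x, y, z]"
    using assms xs(3)
    by (auto simp: length_Suc_conv numeral_3_eq_3 numeral_2_eq_2 le_Suc_eq)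
  then show ?thesis
  proof cases
    case (1 x)
    then show ?thesis using xs that[of x x x] by auto
  next
    case (2 x y)
    then show ?thesis using xs that[of x y y] by auto
  next
    case (3 x y z)
    then show ?thesis using xs that[of x y z] by auto
  qed
qed

lemma quant_err_P_mix_ge:
  assumes "1 \<le> card A" "card A \<le> 3"
  shows "(4 - sqrt 3)/288 \<le> quant_err P_mix A"
proof -
  obtain a1 a2 a3 where a: "a1 \<le> a2" "a2 \<le> a3" and A: "A = {a1, a2, a3}"
    using card_le_3_eq_sorted_triple[OF assms] .
  have mono: "clamp01 a1 \<le> clamp01 a2" "clamp01 a2 \<le> clamp01 a3"
    using a by (auto simp: clamp01_def)
  have "(4 - sqrt 3)/288 \<le> voronoi_cost (clamp01 a1) (clamp01 a2) (clamp01 a3)"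
    using mono by (intro voronoi_cost_ge) (auto simp: clamp01_def)
  also have "\<dots> = quant_err P_mix (clamp01 ` A)"
    using quant_err_P_mix_sorted3[OF mono] by (simp add: A)
  also have "\<dots> \<le> quant_err P_mix A"
    by (rule quant_err_P_mix_clamp01_le) (simp_all add: A)
  finally show ?thesis .
qed

lemma optimal_n_meansI:
  assumes "1 \<le> card \<alpha>" "card \<alpha> \<le> n"
    and "\<And>\<beta>. 1 \<le> card \<beta> \<Longrightarrow> card \<beta> \<le> n \<Longrightarrow> quant_err P \<alpha> \<le> quant_err P \<beta>"
  shows "optimal_n_means P n \<alpha>"
  unfolding optimal_n_means_def quant_Vn_def
  using assms by (auto intro!: cInf_eq_minimum[symmetric])

theorem lemma4p5:
  shows "optimal_n_means P_mix 3
           {(1/3) * ((1/8) * (21 - sqrt 3) - 2), (1/8) * (21 - sqrt 3) - 2, (1/24) * (21 - sqrt 3)}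
         \<and> \<bar>quant_Vn P_mix 3 - 0.00787482\<bar> \<le> 0.000000005"
proof -
  define b1 b2 b3 where "b1 = (5 - sqrt 3)/24" and "b2 = (5 - sqrt 3)/8" and "b3 = (21 - sqrt 3)/24"
  have means: "{(1/3) * ((1/8) * (21 - sqrt 3) - 2), (1/8) * (21 - sqrt 3) - 2, (1/24) * (21 - sqrt 3)}
                 = {b1, b2, b3}"
    by (simp add: b1_def b2_def b3_def field_simps)
  have "b1 < b2" "b2 < b3"
    using sqrt_3_bounds by (simp_all add: b1_def b2_def b3_def)
  then have card: "card {b1, b2, b3} = 3"
    by simp
  have err: "quant_err P_mix {b1, b2, b3} = (4 - sqrt 3)/288"
    using quant_err_P_mix_sorted3 \<open>b1 < b2\<close> \<open>b2 < b3\<close> voronoi_cost_at_centroids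
    by (simp add: b1_def b2_def b3_def)
  have opt: "optimal_n_means P_mix 3 {b1, b2, b3}"
  proof (rule optimal_n_meansI)
    show "quant_err P_mix {b1, b2, b3} \<le> quant_err P_mix \<beta>" if "1 \<le> card \<beta>" "card \<beta> \<le> 3" for \<beta>
      using quant_err_P_mix_ge[OF that] err by simp
  qed (simp_all add: card)
  then have Vn: "quant_Vn P_mix 3 = (4 - sqrt 3)/288"
    using err by (simp add: optimal_n_means_def)
  have "\<bar>(4 - sqrt 3)/288 - 0.00787482\<bar> \<le> (0.000000005 :: real)"
    using sqrt_3_bounds by (simp add: abs_le_iff)
  then show ?thesis
    unfolding means Vn using opt by blast
qed

end
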